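(* Let $R$ be a commutative ring with unit, $\mathcal{P}$ a filtered poset, and $F\colon\mathcal{P}\to R\text{-mod}$ a weak Mackey functor with a quasi-unit. Then $F$ is cofibrant, i.e. the natural map $\operatorname{colim}_{\mathcal{P}_{<i}}F\to F(i)$ is injective for every $i\in\mathcal{P}$.
   Context: A filtered poset is a poset with a map $d\colon\mathcal{P}\to\mathbb{N}$ with $d(i)<d(j)$ whenever $i<j$. (Cofibrant refers to the Reedy model structure on $\operatorname{Fun}(\mathcal{P},\operatorname{Ch}(R))$, in which a functor is cofibrant exactly when these natural maps are injective.) $F(j<i)$ is the image of the arrow $j\to i$, $F(i<i)=1$. $\operatorname{Im}_F(j)=\sum_{k<j}\operatorname{Im}F(k<j)$. An endomorphism (automorphism) $\alpha$ of $F(i)$ is $F$-linear if for every $j<i$ there is an endomorphism (automorphism) $\beta$ of $F(j)$ with $\alpha\circ F(j<i)=F(j<i)\circ\beta$; write $\operatorname{End}^F(i)$, $\operatorname{Aut}^F(i)$. $F$ is a weak Mackey functor if for all $j<i$ there is an $R$-linear $G(j<i)\colon F(i)\to F(j)$ with $G(j<i)\circ F(j<i)=\alpha(i,j)\in\operatorname{End}^F(j)$, and for all $k<i$ with $j\not\le k$, $\operatorname{Im}(G(j<i)\circ F(k<i))\subseteq\operatorname{Im}_F(j)$; it has a quasi-unit if each $\alpha(i,j)\in\operatorname{Aut}^F(j)$. *)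

theory Defs
  imports "HOL-Algebra.Module" "HOL-Algebra.FiniteProduct"
begin

definition linear_map :: "('r, 'x) ring_scheme \<Rightarrow> ('r, 'm) module \<Rightarrow> ('r, 'm) module \<Rightarrow> ('m \<Rightarrow> 'm) \<Rightarrow> bool" where
  "linear_map R M N h \<longleftrightarrow>
     (\<forall>x \<in> carrier M. h x \<in> carrier N) \<and>
     (\<forall>x \<in> carrier M. \<forall>y \<in> carrier M. h (x \<oplus>\<^bsub>M\<^esub> y) = h x \<oplus>\<^bsub>N\<^esub> h y) \<and>
     (\<forall>a \<in> carrier R. \<forall>x \<in> carrier M. h (a \<odot>\<^bsub>M\<^esub> x) = a \<odot>\<^bsub>N\<^esub> h x)"

(* A filtered poset: a partial order (here the whole type 'p) with d : P -> N, i < j ==> d i < d j *)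
definition filtered_poset :: "'p::order itself \<Rightarrow> bool" where
  "filtered_poset _ \<longleftrightarrow> (\<exists>d :: 'p \<Rightarrow> nat. \<forall>i j. i < j \<longrightarrow> d i < d j)"

(* F : P -> R-mod.  M i is the module F(i), f j i is F(j < i) : F(j) -> F(i) for j \<le> i *)
definition is_functor :: "('r, 'x) ring_scheme \<Rightarrow> ('p::order \<Rightarrow> ('r, 'm) module) \<Rightarrow> ('p \<Rightarrow> 'p \<Rightarrow> 'm \<Rightarrow> 'm) \<Rightarrow> bool" where
  "is_functor R M f \<longleftrightarrow>
     (\<forall>i. module R (M i)) \<and>
     (\<forall>j i. j \<le> i \<longrightarrow> linear_map R (M j) (M i) (f j i)) \<and>
     (\<forall>i. \<forall>x \<in> carrier (M i). f i i x = x) \<and>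
     (\<forall>k j i. k \<le> j \<longrightarrow> j \<le> i \<longrightarrow> (\<forall>x \<in> carrier (M k). f j i (f k j x) = f k i x))"

definition EndF :: "('r, 'x) ring_scheme \<Rightarrow> ('p::order \<Rightarrow> ('r, 'm) module) \<Rightarrow> ('p \<Rightarrow> 'p \<Rightarrow> 'm \<Rightarrow> 'm) \<Rightarrow> 'p \<Rightarrow> ('m \<Rightarrow> 'm) set" where
  "EndF R M f i = {\<alpha>. linear_map R (M i) (M i) \<alpha> \<and>
     (\<forall>j. j < i \<longrightarrow> (\<exists>\<beta>. linear_map R (M j) (M j) \<beta> \<and>
         (\<forall>x \<in> carrier (M j). \<alpha> (f j i x) = f j i (\<beta> x))))}"

definition AutF :: "('r, 'x) ring_scheme \<Rightarrow> ('p::order \<Rightarrow> ('r, 'm) module) \<Rightarrow> ('p \<Rightarrow> 'p \<Rightarrow> 'm \<Rightarrow> 'm) \<Rightarrow> 'p \<Rightarrow> ('m \<Rightarrow> 'm) set" where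
  "AutF R M f i = {\<alpha>. linear_map R (M i) (M i) \<alpha> \<and> bij_betw \<alpha> (carrier (M i)) (carrier (M i)) \<and>
     (\<forall>j. j < i \<longrightarrow> (\<exists>\<beta>. linear_map R (M j) (M j) \<beta> \<and> bij_betw \<beta> (carrier (M j)) (carrier (M j)) \<and>
         (\<forall>x \<in> carrier (M j). \<alpha> (f j i x) = f j i (\<beta> x))))}"

(* Im_F(j) = sum over k < j of Im F(k < j)  (submodule sum = set of finite sums) *)
definition ImF :: "('p::order \<Rightarrow> ('r, 'm) module) \<Rightarrow> ('p \<Rightarrow> 'p \<Rightarrow> 'm \<Rightarrow> 'm) \<Rightarrow> 'p \<Rightarrow> 'm set" where
  "ImF M f j = {finsum (M j) (\<lambda>k. f k j (x k)) S | S x.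
       finite S \<and> S \<subseteq> {k. k < j} \<and> (\<forall>k \<in> S. x k \<in> carrier (M k))}"

(* Weak Mackey functor structure given by the maps G j i : F(i) -> F(j), j < i *)
definition weak_Mackey_with :: "('r, 'x) ring_scheme \<Rightarrow> ('p::order \<Rightarrow> ('r, 'm) module) \<Rightarrow> ('p \<Rightarrow> 'p \<Rightarrow> 'm \<Rightarrow> 'm) \<Rightarrow> ('p \<Rightarrow> 'p \<Rightarrow> 'm \<Rightarrow> 'm) \<Rightarrow> bool" where
  "weak_Mackey_with R M f G \<longleftrightarrow>
     (\<forall>j i. j < i \<longrightarrow>
        linear_map R (M i) (M j) (G j i) \<and>
        (\<exists>\<alpha> \<in> EndF R M f j. \<forall>x \<in> carrier (M j). G j i (f j i x) = \<alpha> x) \<and>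
        (\<forall>k. k < i \<and> \<not> j \<le> k \<longrightarrow> (\<lambda>x. G j i (f k i x)) ` carrier (M k) \<subseteq> ImF M f j))"

definition quasi_unit :: "('r, 'x) ring_scheme \<Rightarrow> ('p::order \<Rightarrow> ('r, 'm) module) \<Rightarrow> ('p \<Rightarrow> 'p \<Rightarrow> 'm \<Rightarrow> 'm) \<Rightarrow> ('p \<Rightarrow> 'p \<Rightarrow> 'm \<Rightarrow> 'm) \<Rightarrow> bool" where
  "quasi_unit R M f G \<longleftrightarrow>
     (\<forall>j i. j < i \<longrightarrow> (\<exists>\<alpha> \<in> AutF R M f j. \<forall>x \<in> carrier (M j). G j i (f j i x) = \<alpha> x))"

(* The colimit of F over P_{<i}, constructed as  (direct sum over k < i of F(k)) / relations *)
definition colim_fam :: "('p::order \<Rightarrow> ('r, 'm) module) \<Rightarrow> 'p \<Rightarrow> ('p \<Rightarrow> 'm) set" where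
  "colim_fam M i = {x. (\<forall>k. x k \<in> carrier (M k)) \<and> (\<forall>k. \<not> k < i \<longrightarrow> x k = \<zero>\<^bsub>M k\<^esub>) \<and>
                       finite {k. x k \<noteq> \<zero>\<^bsub>M k\<^esub>}}"

definition colim_gen :: "('p::order \<Rightarrow> ('r, 'm) module) \<Rightarrow> ('p \<Rightarrow> 'p \<Rightarrow> 'm \<Rightarrow> 'm) \<Rightarrow> 'p \<Rightarrow> 'p \<Rightarrow> 'm \<Rightarrow> 'p \<Rightarrow> 'm" where
  "colim_gen M f k l y = (\<lambda>m. if m = k then y else if m = l then \<ominus>\<^bsub>M l\<^esub> (f k l y) else \<zero>\<^bsub>M m\<^esub>)"

(* submodule of relations: generated (as a subgroup, which suffices) by the elementary relations *)
inductive_set colim_rel :: "('p::order \<Rightarrow> ('r, 'm) module) \<Rightarrow> ('p \<Rightarrow> 'p \<Rightarrow> 'm \<Rightarrow> 'm) \<Rightarrow> 'p \<Rightarrow> ('p \<Rightarrow> 'm) set"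
  for M f i where
  zero: "(\<lambda>m. \<zero>\<^bsub>M m\<^esub>) \<in> colim_rel M f i"
| step: "x \<in> colim_rel M f i \<Longrightarrow> k < l \<Longrightarrow> l < i \<Longrightarrow> y \<in> carrier (M k) \<Longrightarrow>
         (\<lambda>m. x m \<oplus>\<^bsub>M m\<^esub> colim_gen M f k l y m) \<in> colim_rel M f i"

(* natural map colim_{P<i} F -> F(i) on representatives *)
definition colim_map :: "('p::order \<Rightarrow> ('r, 'm) module) \<Rightarrow> ('p \<Rightarrow> 'p \<Rightarrow> 'm \<Rightarrow> 'm) \<Rightarrow> 'p \<Rightarrow> ('p \<Rightarrow> 'm) \<Rightarrow> 'm" where
  "colim_map M f i x = finsum (M i) (\<lambda>k. f k i (x k)) {k. x k \<noteq> \<zero>\<^bsub>M k\<^esub>}"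

(* cofibrant: the natural map colim_{P<i} F -> F(i) is injective for every i,
   i.e. representatives with the same image differ by a relation *)
definition cofibrant :: "('p::order \<Rightarrow> ('r, 'm) module) \<Rightarrow> ('p \<Rightarrow> 'p \<Rightarrow> 'm \<Rightarrow> 'm) \<Rightarrow> bool" where
  "cofibrant M f \<longleftrightarrow>
     (\<forall>i. \<forall>x \<in> colim_fam M i. \<forall>y \<in> colim_fam M i.
        colim_map M f i x = colim_map M f i y \<longrightarrow>
        (\<lambda>m. x m \<ominus>\<^bsub>M m\<^esub> y m) \<in> colim_rel M f i)"

end

theory Submission
  imports Defs "HOL-Algebra.AbelCoset"
begin

(* Let x be an element of the direct sum of the F(k), k < i, whose image in F(i) vanishes, and let
   j be an index of its support of maximal degree d j. Applying G(j<i) to the vanishing sum gives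
   alpha(i,j)(x_j) plus terms G(j<i)(F(k<i) x_k) with j not <= k, which lie in Im_F(j) by the weak
   Mackey condition. Since alpha(i,j) is an F-automorphism, x_j itself lies in Im_F(j), say
   x_j = sum of F(k<j) w_k; subtracting the relations e_k(w_k) - e_j(F(k<j) w_k) kills the
   j-component and only adds components of smaller degree. Induction on the degrees in the
   support shows that x is a sum of relations. *)

lemma (in abelian_group) finsum_a_inv:
  assumes "finite A" "g \<in> A \<rightarrow> carrier G"
  shows "\<ominus> finsum G g A = finsum G (\<lambda>a. \<ominus> g a) A"
  using assms by (induction A rule: finite_induct) (auto simp: finsum_insert minus_add Pi_iff)

lemma (in abelian_group_hom) hom_finsum:
  assumes "finite A" "g \<in> A \<rightarrow> carrier G"
  shows "h (finsum G g A) = finsum H (\<lambda>a. h (g a)) A"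
  using assms by (induction A rule: finite_induct) (auto simp: H.finsum_insert Pi_iff)

lemma linear_map_abelian_group_hom:
  assumes "module R M" "module R N" "linear_map R M N h"
  shows "abelian_group_hom M N h"
proof (rule abelian_group_homI)
  show M: "abelian_group M" and N: "abelian_group N"
    using assms(1,2) by (simp_all add: module_def)
  show "group_hom (add_monoid M) (add_monoid N) h"
    using assms(3) abelian_group.a_group[OF M] abelian_group.a_group[OF N]
    by (intro group_hom.intro group_hom_axioms.intro) (auto simp: linear_map_def hom_def)
qed

locale module_functor =
  fixes R :: "('r, 'x) ring_scheme" and M :: "'p::order \<Rightarrow> ('r, 'm) module"
    and f :: "'p \<Rightarrow> 'p \<Rightarrow> 'm \<Rightarrow> 'm"
  assumes is_functor: "is_functor R M f"
begin

lemma abelian_group_M: "abelian_group (M i)"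
  using is_functor by (simp add: is_functor_def module_def)

lemma abelian_monoid_M: "abelian_monoid (M i)"
  using abelian_group_M by (rule abelian_group.axioms(1))

lemmas M_zero_closed = abelian_monoid.zero_closed[OF abelian_monoid_M]
lemmas M_add_closed = abelian_monoid.a_closed[OF abelian_monoid_M]
lemmas M_a_inv_closed = abelian_group.a_inv_closed[OF abelian_group_M]
lemmas M_r_zero = abelian_monoid.r_zero[OF abelian_monoid_M]

lemma M_a_inv_zero: "\<ominus>\<^bsub>M k\<^esub> \<zero>\<^bsub>M k\<^esub> = \<zero>\<^bsub>M k\<^esub>"
proof -
  interpret Mk: abelian_group "M k" by (rule abelian_group_M)
  show ?thesis by simp
qed

lemma M_add_a_inv_cancel:
  assumes "a \<in> carrier (M k)" "b \<in> carrier (M k)"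
  shows "a \<oplus>\<^bsub>M k\<^esub> b \<oplus>\<^bsub>M k\<^esub> \<ominus>\<^bsub>M k\<^esub> b = a"
proof -
  interpret Mk: abelian_group "M k" by (rule abelian_group_M)
  show ?thesis
    using assms by (simp add: Mk.a_assoc Mk.r_neg)
qed

lemma f_hom: "j \<le> i \<Longrightarrow> abelian_group_hom (M j) (M i) (f j i)"
  using is_functor by (intro linear_map_abelian_group_hom) (auto simp: is_functor_def)

lemma f_closed: "j \<le> i \<Longrightarrow> x \<in> carrier (M j) \<Longrightarrow> f j i x \<in> carrier (M i)"
  by (rule abelian_group_hom.hom_closed[OF f_hom])

lemma f_add:
  "j \<le> i \<Longrightarrow> x \<in> carrier (M j) \<Longrightarrow> y \<in> carrier (M j) \<Longrightarrow>
    f j i (x \<oplus>\<^bsub>M j\<^esub> y) = f j i x \<oplus>\<^bsub>M i\<^esub> f j i y"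
  by (rule abelian_group_hom.hom_add[OF f_hom])

lemma f_zero: "j \<le> i \<Longrightarrow> f j i \<zero>\<^bsub>M j\<^esub> = \<zero>\<^bsub>M i\<^esub>"
  by (rule abelian_group_hom.hom_zero[OF f_hom])

lemma f_a_inv: "j \<le> i \<Longrightarrow> x \<in> carrier (M j) \<Longrightarrow> f j i (\<ominus>\<^bsub>M j\<^esub> x) = \<ominus>\<^bsub>M i\<^esub> f j i x"
  by (rule abelian_group_hom.hom_a_inv[OF f_hom])

lemma f_comp: "k \<le> j \<Longrightarrow> j \<le> i \<Longrightarrow> x \<in> carrier (M k) \<Longrightarrow> f j i (f k j x) = f k i x"
  using is_functor by (simp add: is_functor_def)

abbreviation support :: "('p \<Rightarrow> 'm) \<Rightarrow> 'p set" where
  "support x \<equiv> {k. x k \<noteq> \<zero>\<^bsub>M k\<^esub>}"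

lemma colim_fam_iff:
  "x \<in> colim_fam M i \<longleftrightarrow>
    (\<forall>k. x k \<in> carrier (M k)) \<and> (\<forall>k. x k \<noteq> \<zero>\<^bsub>M k\<^esub> \<longrightarrow> k < i) \<and> finite (support x)"
  unfolding colim_fam_def by blast

lemma colim_map_eq_finsum:
  assumes "\<And>k. x k \<in> carrier (M k)" "finite T" "support x \<subseteq> T" "T \<subseteq> {k. k < i}"
  shows "colim_map M f i x = (\<Oplus>\<^bsub>M i\<^esub>k\<in>T. f k i (x k))"
proof -
  interpret Mi: abelian_group "M i" by (rule abelian_group_M)
  show ?thesis unfolding colim_map_def
    by (rule Mi.add.finprod_mono_neutral_cong_left) (use assms f_closed f_zero in auto)
qed

lemma colim_map_closed: "x \<in> colim_fam M i \<Longrightarrow> colim_map M f i x \<in> carrier (M i)"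
  unfolding colim_map_def
  by (rule abelian_monoid.finsum_closed[OF abelian_monoid_M]) (auto simp: colim_fam_iff f_closed)

lemma colim_fam_add:
  assumes "x \<in> colim_fam M i" "y \<in> colim_fam M i"
  shows "(\<lambda>m. x m \<oplus>\<^bsub>M m\<^esub> y m) \<in> colim_fam M i"
proof -
  have "support (\<lambda>m. x m \<oplus>\<^bsub>M m\<^esub> y m) \<subseteq> support x \<union> support y"
    using M_r_zero M_zero_closed assms by (auto simp: colim_fam_iff)
  with assms show ?thesis
    using M_add_closed by (auto simp: colim_fam_iff intro: finite_subset)
qed

lemma colim_map_add:
  assumes x: "x \<in> colim_fam M i" and y: "y \<in> colim_fam M i"
  shows "colim_map M f i (\<lambda>m. x m \<oplus>\<^bsub>M m\<^esub> y m) = colim_map M f i x \<oplus>\<^bsub>M i\<^esub> colim_map M f i y"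
proof -
  interpret Mi: abelian_group "M i" by (rule abelian_group_M)
  let ?T = "support x \<union> support y"
  have T: "finite ?T" "?T \<subseteq> {k. k < i}" and xy: "\<And>k. x k \<in> carrier (M k)" "\<And>k. y k \<in> carrier (M k)"
    using x y by (auto simp: colim_fam_iff)
  have fx: "(\<lambda>k. f k i (x k)) \<in> ?T \<rightarrow> carrier (M i)" and fy: "(\<lambda>k. f k i (y k)) \<in> ?T \<rightarrow> carrier (M i)"
    using T xy by (auto intro!: f_closed simp: subset_iff less_imp_le)
  have "colim_map M f i (\<lambda>m. x m \<oplus>\<^bsub>M m\<^esub> y m) = (\<Oplus>\<^bsub>M i\<^esub>k\<in>?T. f k i (x k \<oplus>\<^bsub>M k\<^esub> y k))"
    using T xy M_r_zero M_zero_closed by (intro colim_map_eq_finsum) (auto intro: M_add_closed)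
  also have "\<dots> = (\<Oplus>\<^bsub>M i\<^esub>k\<in>?T. f k i (x k) \<oplus>\<^bsub>M i\<^esub> f k i (y k))"
    using T xy fx fy by (intro Mi.finsum_cong') (auto simp: f_add less_imp_le)
  also have "\<dots> = (\<Oplus>\<^bsub>M i\<^esub>k\<in>?T. f k i (x k)) \<oplus>\<^bsub>M i\<^esub> (\<Oplus>\<^bsub>M i\<^esub>k\<in>?T. f k i (y k))"
    using fx fy by (rule Mi.finsum_addf)
  also have "\<dots> = colim_map M f i x \<oplus>\<^bsub>M i\<^esub> colim_map M f i y"
    using T xy by (simp add: colim_map_eq_finsum[symmetric])
  finally show ?thesis .
qed

lemma colim_fam_a_inv:
  assumes "x \<in> colim_fam M i"
  shows "(\<lambda>m. \<ominus>\<^bsub>M m\<^esub> x m) \<in> colim_fam M i"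
proof -
  have "support (\<lambda>m. \<ominus>\<^bsub>M m\<^esub> x m) \<subseteq> support x"
    using M_a_inv_zero by auto
  then show ?thesis
    using assms M_a_inv_closed by (auto simp: colim_fam_iff intro: finite_subset)
qed

lemma colim_map_a_inv:
  assumes x: "x \<in> colim_fam M i"
  shows "colim_map M f i (\<lambda>m. \<ominus>\<^bsub>M m\<^esub> x m) = \<ominus>\<^bsub>M i\<^esub> colim_map M f i x"
proof -
  interpret Mi: abelian_group "M i" by (rule abelian_group_M)
  have S: "finite (support x)" "support x \<subseteq> {k. k < i}" and xc: "\<And>k. x k \<in> carrier (M k)"
    using x by (auto simp: colim_fam_iff)
  have "colim_map M f i (\<lambda>m. \<ominus>\<^bsub>M m\<^esub> x m) = (\<Oplus>\<^bsub>M i\<^esub>k\<in>support x. f k i (\<ominus>\<^bsub>M k\<^esub> x k))"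
    using S xc M_a_inv_zero
    by (intro colim_map_eq_finsum) (auto intro: M_a_inv_closed)
  also have "\<dots> = (\<Oplus>\<^bsub>M i\<^esub>k\<in>support x. \<ominus>\<^bsub>M i\<^esub> f k i (x k))"
    using S xc by (intro Mi.finsum_cong') (auto simp: f_a_inv f_closed less_imp_le)
  also have "\<dots> = \<ominus>\<^bsub>M i\<^esub> colim_map M f i x"
    unfolding colim_map_def using S xc by (intro Mi.finsum_a_inv[symmetric]) (auto intro: f_closed less_imp_le)
  finally show ?thesis .
qed

lemma zero_in_colim_fam: "(\<lambda>m. \<zero>\<^bsub>M m\<^esub>) \<in> colim_fam M i"
  using M_zero_closed by (simp add: colim_fam_iff)

lemma colim_map_zero: "colim_map M f i (\<lambda>m. \<zero>\<^bsub>M m\<^esub>) = \<zero>\<^bsub>M i\<^esub>"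
  by (simp add: colim_map_def abelian_monoid.finsum_empty[OF abelian_monoid_M])

lemma ImF_eq_colim_map_image: "ImF M f j = colim_map M f j ` colim_fam M j"
proof
  show "ImF M f j \<subseteq> colim_map M f j ` colim_fam M j"
  proof
    fix y assume "y \<in> ImF M f j"
    then obtain S x where y: "y = (\<Oplus>\<^bsub>M j\<^esub>k\<in>S. f k j (x k))" and S: "finite S" "S \<subseteq> {k. k < j}"
      and x: "\<forall>k\<in>S. x k \<in> carrier (M k)"
      unfolding ImF_def by blast
    interpret Mj: abelian_group "M j" by (rule abelian_group_M)
    define x' where "x' k = (if k \<in> S then x k else \<zero>\<^bsub>M k\<^esub>)" for k
    have x'c: "x' k \<in> carrier (M k)" for k
      using x M_zero_closed by (simp add: x'_def)
    have x'S: "support x' \<subseteq> S"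
      by (auto simp: x'_def)
    have "colim_map M f j x' = (\<Oplus>\<^bsub>M j\<^esub>k\<in>S. f k j (x' k))"
      using x'c S(1) x'S S(2) by (rule colim_map_eq_finsum)
    also have "\<dots> = y"
      unfolding y using S x by (intro Mj.finsum_cong') (auto simp: x'_def intro!: f_closed)
    finally have "y = colim_map M f j x'" ..
    moreover have "x' \<in> colim_fam M j"
      using x'c x'S S by (auto simp: colim_fam_iff intro: finite_subset)
    ultimately show "y \<in> colim_map M f j ` colim_fam M j" ..
  qed
  show "colim_map M f j ` colim_fam M j \<subseteq> ImF M f j"
  proof
    fix y assume "y \<in> colim_map M f j ` colim_fam M j"
    then obtain x where "x \<in> colim_fam M j" and y: "y = colim_map M f j x" ..
    then have "finite (support x)" "support x \<subseteq> {k. k < j}" "\<forall>k\<in>support x. x k \<in> carrier (M k)"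
      by (auto simp: colim_fam_iff)
    then show "y \<in> ImF M f j"
      unfolding y colim_map_def ImF_def by blast
  qed
qed

lemma ImF_subset_carrier: "ImF M f j \<subseteq> carrier (M j)"
  using colim_map_closed by (auto simp: ImF_eq_colim_map_image)

lemma zero_in_ImF: "\<zero>\<^bsub>M j\<^esub> \<in> ImF M f j"
  unfolding ImF_eq_colim_map_image using colim_map_zero[symmetric] zero_in_colim_fam by (rule image_eqI)

lemma ImF_add:
  assumes "y \<in> ImF M f j" "z \<in> ImF M f j"
  shows "y \<oplus>\<^bsub>M j\<^esub> z \<in> ImF M f j"
proof -
  from assms obtain u v where "u \<in> colim_fam M j" "v \<in> colim_fam M j"
    and "y = colim_map M f j u" "z = colim_map M f j v"
    unfolding ImF_eq_colim_map_image by blast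
  then have "y \<oplus>\<^bsub>M j\<^esub> z = colim_map M f j (\<lambda>m. u m \<oplus>\<^bsub>M m\<^esub> v m)"
    and "(\<lambda>m. u m \<oplus>\<^bsub>M m\<^esub> v m) \<in> colim_fam M j"
    by (simp_all add: colim_map_add colim_fam_add)
  then show ?thesis
    unfolding ImF_eq_colim_map_image by (rule image_eqI)
qed

lemma ImF_a_inv:
  assumes "y \<in> ImF M f j"
  shows "\<ominus>\<^bsub>M j\<^esub> y \<in> ImF M f j"
proof -
  from assms obtain u where "u \<in> colim_fam M j" "y = colim_map M f j u"
    unfolding ImF_eq_colim_map_image by blast
  then have "\<ominus>\<^bsub>M j\<^esub> y = colim_map M f j (\<lambda>m. \<ominus>\<^bsub>M m\<^esub> u m)"
    and "(\<lambda>m. \<ominus>\<^bsub>M m\<^esub> u m) \<in> colim_fam M j"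
    by (simp_all add: colim_map_a_inv colim_fam_a_inv)
  then show ?thesis
    unfolding ImF_eq_colim_map_image by (rule image_eqI)
qed

lemma ImF_finsum:
  assumes "finite A" "\<And>a. a \<in> A \<Longrightarrow> g a \<in> ImF M f j"
  shows "(\<Oplus>\<^bsub>M j\<^esub>a\<in>A. g a) \<in> ImF M f j"
  using assms
proof (induction A rule: finite_induct)
  case empty
  then show ?case
    using zero_in_ImF by (simp add: abelian_monoid.finsum_empty[OF abelian_monoid_M])
next
  case (insert a A)
  then have "g \<in> insert a A \<rightarrow> carrier (M j)"
    using ImF_subset_carrier by blast
  with insert show ?case
    by (simp add: abelian_monoid.finsum_insert[OF abelian_monoid_M] ImF_add)
qed

lemma ImF_AutF_reflect:
  assumes "\<alpha> \<in> AutF R M f j" "y \<in> carrier (M j)" "\<alpha> y \<in> ImF M f j"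
  shows "y \<in> ImF M f j"
proof -
  interpret Mj: abelian_group "M j" by (rule abelian_group_M)
  from assms(1) have \<alpha>_hom: "abelian_group_hom (M j) (M j) \<alpha>"
    and \<alpha>_inj: "inj_on \<alpha> (carrier (M j))"
    and "\<forall>k. \<exists>\<beta>. k < j \<longrightarrow> bij_betw \<beta> (carrier (M k)) (carrier (M k)) \<and>
         (\<forall>x\<in>carrier (M k). \<alpha> (f k j x) = f k j (\<beta> x))"
    using is_functor
    by (auto simp: AutF_def is_functor_def bij_betw_def intro: linear_map_abelian_group_hom)
  then obtain \<beta> where \<beta>: "\<And>k. k < j \<Longrightarrow> bij_betw (\<beta> k) (carrier (M k)) (carrier (M k))"
    and \<alpha>_f: "\<And>k x. k < j \<Longrightarrow> x \<in> carrier (M k) \<Longrightarrow> \<alpha> (f k j x) = f k j (\<beta> k x)"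
    by (metis order.strict_iff_not)
  obtain S w where \<alpha>y: "\<alpha> y = (\<Oplus>\<^bsub>M j\<^esub>k\<in>S. f k j (w k))" and S: "finite S" "S \<subseteq> {k. k < j}"
    and w: "\<forall>k\<in>S. w k \<in> carrier (M k)"
    using assms(3) unfolding ImF_def by blast
  define w' where "w' k = inv_into (carrier (M k)) (\<beta> k) (w k)" for k
  have w': "w' k \<in> carrier (M k)" "\<beta> k (w' k) = w k" if "k \<in> S" for k
    using that S w \<beta>[of k] unfolding w'_def
    by (auto intro: inv_into_into f_inv_into_f simp: bij_betw_def)
  let ?z = "\<Oplus>\<^bsub>M j\<^esub>k\<in>S. f k j (w' k)"
  have fw': "(\<lambda>k. f k j (w' k)) \<in> S \<rightarrow> carrier (M j)"
    using S w' by (auto intro!: f_closed)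
  have "\<alpha> ?z = (\<Oplus>\<^bsub>M j\<^esub>k\<in>S. \<alpha> (f k j (w' k)))"
    using S(1) fw' by (rule abelian_group_hom.hom_finsum[OF \<alpha>_hom])
  also have "\<dots> = \<alpha> y"
    unfolding \<alpha>y using S w w' fw' \<alpha>_f by (intro Mj.finsum_cong') (auto intro!: f_closed)
  finally have "?z = y"
    using \<alpha>_inj fw' assms(2) by (auto dest: inj_onD)
  moreover have "?z \<in> ImF M f j"
    using S w' unfolding ImF_def by blast
  ultimately show ?thesis by simp
qed

lemma colim_gen_in_colim_fam:
  assumes "k < l" "l < i" "y \<in> carrier (M k)"
  shows "colim_gen M f k l y \<in> colim_fam M i"
proof -
  have "support (colim_gen M f k l y) \<subseteq> {k, l}"
    by (auto simp: colim_gen_def)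
  then show ?thesis
    using assms M_zero_closed M_a_inv_closed f_closed
    by (auto simp: colim_fam_iff colim_gen_def intro: finite_subset)
qed

lemma colim_map_colim_gen:
  assumes kl: "k < l" and li: "l < i" and y: "y \<in> carrier (M k)"
  shows "colim_map M f i (colim_gen M f k l y) = \<zero>\<^bsub>M i\<^esub>"
proof -
  interpret Mi: abelian_group "M i" by (rule abelian_group_M)
  have ki: "k < i" and "k \<noteq> l"
    using kl li by auto
  have fky: "f k i y \<in> carrier (M i)"
    using ki y by (auto intro: f_closed)
  have "colim_map M f i (colim_gen M f k l y) = (\<Oplus>\<^bsub>M i\<^esub>m\<in>{k, l}. f m i (colim_gen M f k l y m))"
    using colim_gen_in_colim_fam[OF assms] ki li
    by (intro colim_map_eq_finsum) (auto simp: colim_fam_iff colim_gen_def)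
  also have "\<dots> = f k i y \<oplus>\<^bsub>M i\<^esub> f l i (\<ominus>\<^bsub>M l\<^esub> f k l y)"
    using \<open>k \<noteq> l\<close> kl li y fky
    by (simp add: colim_gen_def Mi.finsum_singleton f_closed M_a_inv_closed)
  also have "\<dots> = f k i y \<oplus>\<^bsub>M i\<^esub> \<ominus>\<^bsub>M i\<^esub> f k i y"
    using kl li y by (simp add: f_a_inv f_comp f_closed)
  also have "\<dots> = \<zero>\<^bsub>M i\<^esub>"
    using fky by (rule Mi.r_neg)
  finally show ?thesis .
qed

lemma colim_rel_cancel_gen:
  assumes x: "\<And>m. x m \<in> carrier (M m)" and kl: "k < l" and li: "l < i" and y: "y \<in> carrier (M k)"
    and rel: "(\<lambda>m. x m \<oplus>\<^bsub>M m\<^esub> colim_gen M f k l y m) \<in> colim_rel M f i"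
  shows "x \<in> colim_rel M f i"
proof -
  \<comment> \<open>Adding the generator for \<open>\<ominus> y\<close> undoes adding the one for \<open>y\<close>.\<close>
  have "(\<lambda>m. (x m \<oplus>\<^bsub>M m\<^esub> colim_gen M f k l y m) \<oplus>\<^bsub>M m\<^esub> colim_gen M f k l (\<ominus>\<^bsub>M k\<^esub> y) m) \<in> colim_rel M f i"
    using rel kl li M_a_inv_closed[OF y] by (rule colim_rel.step)
  also have "(\<lambda>m. (x m \<oplus>\<^bsub>M m\<^esub> colim_gen M f k l y m) \<oplus>\<^bsub>M m\<^esub> colim_gen M f k l (\<ominus>\<^bsub>M k\<^esub> y) m) = x"
  proof
    fix m
    have "f k l (\<ominus>\<^bsub>M k\<^esub> y) = \<ominus>\<^bsub>M l\<^esub> f k l y" "f k l y \<in> carrier (M l)"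
      using kl y by (simp_all add: f_a_inv f_closed)
    then show "(x m \<oplus>\<^bsub>M m\<^esub> colim_gen M f k l y m) \<oplus>\<^bsub>M m\<^esub> colim_gen M f k l (\<ominus>\<^bsub>M k\<^esub> y) m = x m"
      using x[of m] y kl by (auto simp: colim_gen_def M_add_a_inv_cancel M_a_inv_closed M_r_zero)
  qed
  finally show ?thesis .
qed

lemma colim_rel_eliminate_component:
  assumes ji: "j < i" and "finite S" "S \<subseteq> {k. k < j}" "\<forall>k\<in>S. w k \<in> carrier (M k)"
    and "x \<in> colim_fam M i" "x j = (\<Oplus>\<^bsub>M j\<^esub>k\<in>S. f k j (w k))"
  shows "\<exists>x'. x' \<in> colim_fam M i \<and> colim_map M f i x' = colim_map M f i x \<and> x' j = \<zero>\<^bsub>M j\<^esub> \<and>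
    (\<forall>k. k \<noteq> j \<and> \<not> k < j \<longrightarrow> x' k = x k) \<and> (x' \<in> colim_rel M f i \<longrightarrow> x \<in> colim_rel M f i)"
  using assms(2-6)
proof (induction S arbitrary: x rule: finite_induct)
  case empty
  then show ?case by (auto simp: abelian_monoid.finsum_empty[OF abelian_monoid_M])
next
  case (insert a S)
  interpret Mj: abelian_group "M j" by (rule abelian_group_M)
  have aj: "a < j" and wa: "w a \<in> carrier (M a)" and S: "S \<subseteq> {k. k < j}" "\<forall>k\<in>S. w k \<in> carrier (M k)"
    using insert.prems by auto
  have x: "\<And>k. x k \<in> carrier (M k)"
    using insert.prems by (simp add: colim_fam_iff)
  define g where "g = colim_gen M f a j (w a)"
  define x'' where "x'' = (\<lambda>m. x m \<oplus>\<^bsub>M m\<^esub> g m)"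
  have g: "g \<in> colim_fam M i" "colim_map M f i g = \<zero>\<^bsub>M i\<^esub>"
    unfolding g_def using aj ji wa by (simp_all add: colim_gen_in_colim_fam colim_map_colim_gen)
  have x''_fam: "x'' \<in> colim_fam M i"
    unfolding x''_def using insert.prems g by (intro colim_fam_add)
  have x''_map: "colim_map M f i x'' = colim_map M f i x"
    unfolding x''_def using insert.prems g colim_map_closed M_r_zero by (simp add: colim_map_add)
  have fwa: "f a j (w a) \<in> carrier (M j)" and fwS: "(\<lambda>k. f k j (w k)) \<in> S \<rightarrow> carrier (M j)"
    using aj wa S by (auto intro!: f_closed)
  have "x'' j = f a j (w a) \<oplus>\<^bsub>M j\<^esub> (\<Oplus>\<^bsub>M j\<^esub>k\<in>S. f k j (w k)) \<oplus>\<^bsub>M j\<^esub> \<ominus>\<^bsub>M j\<^esub> f a j (w a)"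
    using insert.prems insert.hyps aj fwa fwS
    by (simp add: x''_def g_def colim_gen_def Mj.finsum_insert less_imp_neq[symmetric])
  then have x''_j: "x'' j = (\<Oplus>\<^bsub>M j\<^esub>k\<in>S. f k j (w k))"
    using fwa Mj.finsum_closed[OF fwS] by (simp add: Mj.a_ac Mj.r_neg2)
  have x''_other: "x'' k = x k" if "k \<noteq> a" "k \<noteq> j" for k
    using that x M_r_zero by (simp add: x''_def g_def colim_gen_def)
  obtain x' where x': "x' \<in> colim_fam M i" "colim_map M f i x' = colim_map M f i x''" "x' j = \<zero>\<^bsub>M j\<^esub>"
    "\<forall>k. k \<noteq> j \<and> \<not> k < j \<longrightarrow> x' k = x'' k" "x' \<in> colim_rel M f i \<longrightarrow> x'' \<in> colim_rel M f i"
    using insert.IH[OF S x''_fam x''_j] by blast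
  have "x'' \<in> colim_rel M f i \<Longrightarrow> x \<in> colim_rel M f i"
    using x aj ji wa by (rule colim_rel_cancel_gen) (simp add: x''_def g_def)
  with x' x''_map x''_other aj show ?case
    by (metis order.strict_iff_not)
qed

lemma cofibrant_if_kernel_in_colim_rel:
  assumes kernel: "\<And>i x. x \<in> colim_fam M i \<Longrightarrow> colim_map M f i x = \<zero>\<^bsub>M i\<^esub> \<Longrightarrow> x \<in> colim_rel M f i"
  shows "cofibrant M f"
  unfolding cofibrant_def
proof (intro allI ballI impI)
  fix i x y
  assume x: "x \<in> colim_fam M i" and y: "y \<in> colim_fam M i"
    and eq: "colim_map M f i x = colim_map M f i y"
  interpret Mi: abelian_group "M i" by (rule abelian_group_M)
  have diff: "(\<lambda>m. x m \<ominus>\<^bsub>M m\<^esub> y m) = (\<lambda>m. x m \<oplus>\<^bsub>M m\<^esub> (\<lambda>m. \<ominus>\<^bsub>M m\<^esub> y m) m)"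
    by (simp add: a_minus_def)
  show "(\<lambda>m. x m \<ominus>\<^bsub>M m\<^esub> y m) \<in> colim_rel M f i"
    unfolding diff
  proof (rule kernel)
    show "(\<lambda>m. x m \<oplus>\<^bsub>M m\<^esub> (\<lambda>m. \<ominus>\<^bsub>M m\<^esub> y m) m) \<in> colim_fam M i"
      using x y by (intro colim_fam_add colim_fam_a_inv)
    show "colim_map M f i (\<lambda>m. x m \<oplus>\<^bsub>M m\<^esub> (\<lambda>m. \<ominus>\<^bsub>M m\<^esub> y m) m) = \<zero>\<^bsub>M i\<^esub>"
      using x y colim_map_closed[OF y]
      by (simp add: colim_map_add colim_fam_a_inv colim_map_a_inv eq Mi.r_neg)
  qed
qed

end

locale weak_Mackey_quasi_unit = module_functor R M f
  for R :: "('r, 'x) ring_scheme" and M :: "'p::order \<Rightarrow> ('r, 'm) module" and f +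
  fixes G :: "'p \<Rightarrow> 'p \<Rightarrow> 'm \<Rightarrow> 'm"
  assumes weak_Mackey: "weak_Mackey_with R M f G" and quasi_unit: "quasi_unit R M f G"
begin

lemma G_hom: "j < i \<Longrightarrow> abelian_group_hom (M i) (M j) (G j i)"
  using weak_Mackey is_functor
  by (intro linear_map_abelian_group_hom) (auto simp: weak_Mackey_with_def is_functor_def)

lemma G_f_in_ImF: "j < i \<Longrightarrow> k < i \<Longrightarrow> \<not> j \<le> k \<Longrightarrow> y \<in> carrier (M k) \<Longrightarrow> G j i (f k i y) \<in> ImF M f j"
  using weak_Mackey unfolding weak_Mackey_with_def by blast

lemma maximal_component_in_ImF:
  assumes x: "x \<in> colim_fam M i" and ker: "colim_map M f i x = \<zero>\<^bsub>M i\<^esub>"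
    and xj: "x j \<noteq> \<zero>\<^bsub>M j\<^esub>" and maximal: "\<And>k. x k \<noteq> \<zero>\<^bsub>M k\<^esub> \<Longrightarrow> \<not> j < k"
  shows "x j \<in> ImF M f j"
proof -
  interpret Mj: abelian_group "M j" by (rule abelian_group_M)
  interpret G: abelian_group_hom "M i" "M j" "G j i"
    using x xj by (intro G_hom) (auto simp: colim_fam_iff)
  have xc: "\<And>k. x k \<in> carrier (M k)" and below: "\<And>k. x k \<noteq> \<zero>\<^bsub>M k\<^esub> \<Longrightarrow> k < i"
    and fin: "finite (support x)"
    using x by (auto simp: colim_fam_iff)
  have ji: "j < i"
    using below xj .
  obtain \<alpha> where \<alpha>: "\<alpha> \<in> AutF R M f j" and G_f: "\<And>y. y \<in> carrier (M j) \<Longrightarrow> G j i (f j i y) = \<alpha> y"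
    using quasi_unit ji unfolding quasi_unit_def by blast
  have \<alpha>xj: "\<alpha> (x j) \<in> carrier (M j)"
    using G_f[OF xc] ji xc by (metis G.hom_closed f_closed less_imp_le)
  let ?t = "\<Oplus>\<^bsub>M j\<^esub>k\<in>support x - {j}. G j i (f k i (x k))"
  have t: "?t \<in> ImF M f j"
  proof (rule ImF_finsum)
    fix k assume "k \<in> support x - {j}"
    then show "G j i (f k i (x k)) \<in> ImF M f j"
      using ji below maximal xc by (intro G_f_in_ImF) (auto simp: order.order_iff_strict)
  qed (use fin in simp)
  have fx: "(\<lambda>k. f k i (x k)) \<in> support x \<rightarrow> carrier (M i)"
    using below xc by (auto intro!: f_closed less_imp_le)
  have "\<zero>\<^bsub>M j\<^esub> = G j i (colim_map M f i x)"
    using ker by simp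
  also have "\<dots> = (\<Oplus>\<^bsub>M j\<^esub>k\<in>support x. G j i (f k i (x k)))"
    unfolding colim_map_def using fin fx by (rule G.hom_finsum)
  also have "support x = insert j (support x - {j})"
    using xj by blast
  also have "(\<Oplus>\<^bsub>M j\<^esub>k\<in>insert j (support x - {j}). G j i (f k i (x k))) = G j i (f j i (x j)) \<oplus>\<^bsub>M j\<^esub> ?t"
    using fin fx xj by (intro Mj.finsum_insert) (auto intro!: G.hom_closed)
  also have "G j i (f j i (x j)) = \<alpha> (x j)"
    using G_f xc by blast
  finally have sum_zero: "\<alpha> (x j) \<oplus>\<^bsub>M j\<^esub> ?t = \<zero>\<^bsub>M j\<^esub>"
    by (rule sym)
  have "?t \<in> carrier (M j)"
    using t ImF_subset_carrier by blast
  then have "\<ominus>\<^bsub>M j\<^esub> ?t = \<alpha> (x j)"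
    using sum_zero \<alpha>xj by (intro Mj.minus_equality)
  then have "\<alpha> (x j) \<in> ImF M f j"
    using ImF_a_inv[OF t] by simp
  then show ?thesis
    by (rule ImF_AutF_reflect[OF \<alpha> xc])
qed

text \<open>Removes the support indices of top degree \<open>D\<close> one at a time.\<close>

lemma colim_rel_if_levels_below_or_in:
  fixes d :: "'p \<Rightarrow> nat"
  assumes d: "strict_mono d"
    and below: "\<And>x. x \<in> colim_fam M i \<Longrightarrow> colim_map M f i x = \<zero>\<^bsub>M i\<^esub> \<Longrightarrow>
      (\<And>k. x k \<noteq> \<zero>\<^bsub>M k\<^esub> \<Longrightarrow> d k < D) \<Longrightarrow> x \<in> colim_rel M f i"
    and "finite A" and level: "\<And>k. k \<in> A \<Longrightarrow> d k = D"
  shows "x \<in> colim_fam M i \<Longrightarrow> colim_map M f i x = \<zero>\<^bsub>M i\<^esub> \<Longrightarrow>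
    (\<And>k. x k \<noteq> \<zero>\<^bsub>M k\<^esub> \<Longrightarrow> d k < D \<or> k \<in> A) \<Longrightarrow> x \<in> colim_rel M f i"
  using \<open>finite A\<close> level
proof (induction A arbitrary: x rule: finite_induct)
  case empty
  then show ?case using below by blast
next
  case (insert j A)
  show ?case
  proof (cases "x j = \<zero>\<^bsub>M j\<^esub>")
    case True
    have "d k < D \<or> k \<in> A" if "x k \<noteq> \<zero>\<^bsub>M k\<^esub>" for k
      using insert.prems(3)[OF that] that True by auto
    then show ?thesis
      using insert.IH[OF insert.prems(1,2)] insert.prems(4) by blast
  next
    case False
    have dj: "d j = D"
      using insert.prems by simp
    have ji: "j < i"
      using insert.prems(1) False by (simp add: colim_fam_iff)
    have "\<not> j < k" if "x k \<noteq> \<zero>\<^bsub>M k\<^esub>" for k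
    proof -
      have "d k \<le> D"
        using insert.prems(3)[OF that] insert.prems(4) by fastforce
      then show ?thesis
        using strict_monoD[OF d, of j k] dj by auto
    qed
    then have "x j \<in> ImF M f j"
      using insert.prems(1,2) False by (rule maximal_component_in_ImF[rotated 3])
    then obtain S w where xj: "x j = (\<Oplus>\<^bsub>M j\<^esub>k\<in>S. f k j (w k))"
      and S: "finite S" "S \<subseteq> {k. k < j}" and w: "\<forall>k\<in>S. w k \<in> carrier (M k)"
      unfolding ImF_def by blast
    obtain x' where x': "x' \<in> colim_fam M i" "colim_map M f i x' = colim_map M f i x"
      "x' j = \<zero>\<^bsub>M j\<^esub>" "\<forall>k. k \<noteq> j \<and> \<not> k < j \<longrightarrow> x' k = x k"
      "x' \<in> colim_rel M f i \<longrightarrow> x \<in> colim_rel M f i"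
      using colim_rel_eliminate_component[OF ji S w insert.prems(1) xj] by blast
    have x'_levels: "d k < D \<or> k \<in> A" if "x' k \<noteq> \<zero>\<^bsub>M k\<^esub>" for k
    proof (cases "k < j")
      case True
      then show ?thesis using strict_monoD[OF d] dj by blast
    next
      case False
      then have "k \<noteq> j" "x' k = x k"
        using that x' by auto
      then show ?thesis
        using insert.prems(3)[of k] that by auto
    qed
    have "colim_map M f i x' = \<zero>\<^bsub>M i\<^esub>"
      using x'(2) insert.prems(2) by simp
    then have "x' \<in> colim_rel M f i"
      by (rule insert.IH[OF x'(1)]) (use x'_levels insert.prems(4) in auto)
    then show ?thesis
      using x' by blast
  qed
qed

lemma colim_rel_if_levels_below:
  fixes d :: "'p \<Rightarrow> nat"
  assumes d: "strict_mono d"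
  shows "x \<in> colim_fam M i \<Longrightarrow> colim_map M f i x = \<zero>\<^bsub>M i\<^esub> \<Longrightarrow>
    (\<And>k. x k \<noteq> \<zero>\<^bsub>M k\<^esub> \<Longrightarrow> d k < D) \<Longrightarrow> x \<in> colim_rel M f i"
proof (induction D arbitrary: x)
  case 0
  then have "x = (\<lambda>m. \<zero>\<^bsub>M m\<^esub>)"
    by auto
  then show ?case
    by (simp add: colim_rel.zero)
next
  case (Suc D)
  let ?A = "{k. x k \<noteq> \<zero>\<^bsub>M k\<^esub> \<and> d k = D}"
  have "finite ?A"
    using Suc.prems(1) by (simp add: colim_fam_iff)
  moreover have "d k < D \<or> k \<in> ?A" if "x k \<noteq> \<zero>\<^bsub>M k\<^esub>" for k
    using Suc.prems(3)[OF that] that by auto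
  ultimately show ?case
    using colim_rel_if_levels_below_or_in[OF d Suc.IH] Suc.prems(1,2) by blast
qed

lemma kernel_colim_map_subset_colim_rel:
  assumes "filtered_poset TYPE('p)" "x \<in> colim_fam M i" "colim_map M f i x = \<zero>\<^bsub>M i\<^esub>"
  shows "x \<in> colim_rel M f i"
proof -
  obtain d :: "'p \<Rightarrow> nat" where d: "strict_mono d"
    using assms(1) unfolding filtered_poset_def strict_mono_def by blast
  have "finite (support x)"
    using assms(2) by (simp add: colim_fam_iff)
  then have "d k < Suc (Max (d ` support x))" if "x k \<noteq> \<zero>\<^bsub>M k\<^esub>" for k
    using that by (simp add: le_imp_less_Suc)
  then show ?thesis
    using colim_rel_if_levels_below[OF d assms(2,3)] by blast
qed

end

theorem lemma3p4:
  fixes R :: "('r, 'x) ring_scheme"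
    and M :: "'p::order \<Rightarrow> ('r, 'm) module"
    and f :: "'p \<Rightarrow> 'p \<Rightarrow> 'm \<Rightarrow> 'm"
  assumes "cring R"
    and "filtered_poset TYPE('p)"
    and "is_functor R M f"
    and "\<exists>G. weak_Mackey_with R M f G \<and> quasi_unit R M f G"
  shows "cofibrant M f"
proof -
  obtain G where "weak_Mackey_with R M f G" "quasi_unit R M f G"
    using assms(4) by blast
  with assms(3) interpret weak_Mackey_quasi_unit R M f G
    by unfold_locales
  show ?thesis
    by (rule cofibrant_if_kernel_in_colim_rel) (rule kernel_colim_map_subset_colim_rel[OF assms(2)])
qed

end
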